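(* For every $n\geq 1$, the number of Grand-Dyck paths of semilength $n$ starting with an up step and avoiding the pattern $UDU$ equals the coefficient of $z^n$ in $\frac{1-3z-\sqrt{1-2z-3z^2}}{6z-2}$, i.e. the $n$-th term of OEIS sequence A005773 ($1,1,2,5,13,35,96,\dots$ indexed from $n=0$).
   Context: A Grand-Dyck path of semilength $n$ starting with an up step is a word with exactly $n$ letters $U$ and $n$ letters $D$ whose first letter is $U$. It avoids the pattern $UDU$ if it has no three consecutive letters equal to $U,D,U$. *)

theory Defs
  imports Complex_Main "HOL-Computational_Algebra.Formal_Power_Series"
begin

datatype step = U | D

definition avoids_UDU :: "step list \<Rightarrow> bool" where
  "avoids_UDU w \<longleftrightarrow>
     \<not> (\<exists>i. i + 2 < length w \<and> w ! i = U \<and> w ! (i + 1) = D \<and> w ! (i + 2) = U)"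

definition gd_UDU_avoid :: "nat \<Rightarrow> step list set" where
  "gd_UDU_avoid n = {w. length (filter (\<lambda>s. s = U) w) = n \<and> length (filter (\<lambda>s. s = D) w) = n
      \<and> w \<noteq> [] \<and> hd w = U \<and> avoids_UDU w}"

definition sqrt_ser :: "real fps" where
  "sqrt_ser = fps_radical (\<lambda>k x. root k x) 2 (1 - 2 * fps_X - 3 * fps_X ^ 2)"

definition gf :: "real fps" where
  "gf = (1 - 3 * fps_X - sqrt_ser) / (6 * fps_X - 2)"

end

(*
  A path starting with U is a sequence of runs U^a_1 D^b_1 ... U^a_k D^b_k with a_i >= 1 and
  b_i >= 1 for i < k, and it avoids UDU iff b_i >= 2 for i < k.  Counting these run lengths as
  compositions, the number of such paths of semilength m + 1 is
  sum_j (m choose j) ((m+1-j) choose j).  A Wilf-Zeilberger certificate shows that this sum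
  satisfies (m+3) a(m+2) = 2 (m+3) a(m+1) + 3 (m+1) a(m).  On the other side,
  sqrt(1-2z-3z^2) = (1-3z) (1 + 2 gf), and differentiating its square gives
  (1-2z-3z^2) gf' = 1 + 2 gf, so the coefficients of gf from z^1 on obey the same recurrence.
  Both sequences start with 1, 2.
*)
theory Submission
  imports Defs
begin

lemma avoids_UDU_Nil [simp]: "avoids_UDU []"
  by (simp add: avoids_UDU_def)

lemma avoids_UDU_Cons:
  "avoids_UDU (x # w) \<longleftrightarrow> \<not> (x = U \<and> take 2 w = [D, U]) \<and> avoids_UDU w"
proof -
  have starts_UDU: "(x = U \<and> take 2 w = [D, U]) \<longleftrightarrow> 2 < length (x # w) \<and> x = U \<and> w ! 0 = D \<and> w ! 1 = U"
    by (cases w; cases "tl w") auto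
  have ex_nat_cases: "(\<exists>i. P i) \<longleftrightarrow> P 0 \<or> (\<exists>i. P (Suc i))" for P
    by (metis not0_implies_Suc)
  show ?thesis
    unfolding avoids_UDU_def by (subst ex_nat_cases) (simp add: starts_UDU)
qed

lemma avoids_UDU_replicate_D_append [simp]: "avoids_UDU (replicate q D @ w) \<longleftrightarrow> avoids_UDU w"
  by (induction q) (simp_all add: avoids_UDU_Cons)

lemma avoids_UDU_replicate_U_append:
  "avoids_UDU (replicate (Suc p) U @ w) \<longleftrightarrow> take 2 w \<noteq> [D, U] \<and> avoids_UDU w"
  by (induction p) (simp_all add: avoids_UDU_Cons)

lemma avoids_UDU_block:
  assumes "r = [] \<or> hd r = U"
  shows "avoids_UDU (replicate (Suc p) U @ replicate q D @ r) \<longleftrightarrow> (q = 1 \<longrightarrow> r = []) \<and> avoids_UDU r"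
proof -
  have "take 2 (replicate q D @ r) = [D, U] \<longleftrightarrow> q = 1 \<and> r \<noteq> []"
    using assms by (cases r; cases q; cases "q - 1") (auto simp: numeral_2_eq_2)
  then show ?thesis
    unfolding avoids_UDU_replicate_U_append by simp
qed

lemma replicate_append_decomp: "\<exists>p v. w = replicate p a @ v \<and> (v = [] \<or> hd v \<noteq> a)"
proof (intro exI conjI)
  show "w = replicate (length (takeWhile (\<lambda>s. s = a) w)) a @ dropWhile (\<lambda>s. s = a) w"
    by (subst replicate_length_same) (auto dest: set_takeWhileD)
  show "dropWhile (\<lambda>s. s = a) w = [] \<or> hd (dropWhile (\<lambda>s. s = a) w) \<noteq> a"
    using hd_dropWhile by blast
qed

lemma replicate_append_unique:
  assumes "replicate p a @ v = replicate p' a @ v'"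
    and "v = [] \<or> hd v \<noteq> a" and "v' = [] \<or> hd v' \<noteq> a"
  shows "p = p' \<and> v = v'"
  using assms
proof (induction p arbitrary: p')
  case 0
  then show ?case by (cases p') auto
next
  case (Suc p)
  then show ?case by (cases p') auto
qed

lemma step_runs_decomp:
  assumes "w \<noteq> []" and "hd w = U"
  obtains p q r where "w = replicate (Suc p) U @ replicate q D @ r" and "r = [] \<or> 0 < q \<and> hd r = U"
proof -
  obtain p v where w: "w = replicate p U @ v" and v: "v = [] \<or> hd v \<noteq> U"
    using replicate_append_decomp[of w U] by blast
  obtain q r where v_eq: "v = replicate q D @ r" and r: "r = [] \<or> hd r \<noteq> D"
    using replicate_append_decomp[of v D] by blast
  have "p \<noteq> 0"
    using assms w v by (cases p) auto
  moreover have "r = [] \<or> 0 < q \<and> hd r = U"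
    using v v_eq r by (cases q; cases "hd r") auto
  ultimately show thesis
    using that w v_eq by (metis not0_implies_Suc)
qed

lemma step_runs_unique:
  assumes "replicate p U @ replicate q D @ r = replicate p' U @ replicate q' D @ r'"
    and "r = [] \<or> 0 < q \<and> hd r = U" and "r' = [] \<or> 0 < q' \<and> hd r' = U"
  shows "p = p' \<and> q = q' \<and> r = r'"
proof -
  have "replicate q D @ r = [] \<or> hd (replicate q D @ r) \<noteq> U"
    using assms(2) by (cases q) auto
  moreover have "replicate q' D @ r' = [] \<or> hd (replicate q' D @ r') \<noteq> U"
    using assms(3) by (cases q') auto
  ultimately have p: "p = p'" and qr: "replicate q D @ r = replicate q' D @ r'"
    using replicate_append_unique[OF assms(1)] by blast+
  have "r = [] \<or> hd r \<noteq> D" and "r' = [] \<or> hd r' \<noteq> D"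
    using assms(2,3) by auto
  with p show ?thesis
    using replicate_append_unique[OF qr] by blast
qed

text \<open>The path U^(x_1+1) D^(y_1+2) ... U^(x_(k-1)+1) D^(y_(k-1)+2) U^(x_k+1) D^(y_k): a D-run
  of length one between two U-runs would be an occurrence of UDU.\<close>
fun path_of_runs :: "nat list \<Rightarrow> nat list \<Rightarrow> step list" where
  "path_of_runs (x # xs) (y # ys) =
     replicate (Suc x) U @ replicate (if xs = [] then y else Suc (Suc y)) D @ path_of_runs xs ys"
| "path_of_runs _ _ = []"

lemma length_filter_U_path_of_runs:
  "length xs = length ys \<Longrightarrow> length (filter (\<lambda>s. s = U) (path_of_runs xs ys)) = sum_list xs + length xs"
  by (induction xs ys rule: list_induct2) simp_all

lemma length_filter_D_path_of_runs:
  "length xs = length ys \<Longrightarrow>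
     length (filter (\<lambda>s. s = D) (path_of_runs xs ys)) = sum_list ys + 2 * (length ys - 1)"
proof (induction xs ys rule: list_induct2)
  case (Cons x xs y ys)
  then show ?case by (cases ys) auto
qed simp

lemma path_of_runs_eq_Nil_iff:
  "length xs = length ys \<Longrightarrow> path_of_runs xs ys = [] \<longleftrightarrow> xs = []"
  by (cases xs; cases ys) auto

lemma hd_path_of_runs:
  "length xs = length ys \<Longrightarrow> xs \<noteq> [] \<Longrightarrow> hd (path_of_runs xs ys) = U"
  by (cases xs; cases ys) auto

lemma path_of_runs_eq_Nil_or_hd_U:
  "length xs = length ys \<Longrightarrow> path_of_runs xs ys = [] \<or> hd (path_of_runs xs ys) = U"
  using hd_path_of_runs path_of_runs_eq_Nil_iff by blast

lemma avoids_UDU_path_of_runs: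
  "length xs = length ys \<Longrightarrow> avoids_UDU (path_of_runs xs ys)"
proof (induction xs ys rule: list_induct2)
  case (Cons x xs y ys)
  then show ?case
    unfolding path_of_runs.simps(1) avoids_UDU_block[OF path_of_runs_eq_Nil_or_hd_U[OF Cons.hyps]]
    by (simp add: path_of_runs_eq_Nil_iff)
qed simp

lemma path_of_runs_inj:
  assumes "length xs = length ys" and "length xs' = length ys'"
    and "path_of_runs xs ys = path_of_runs xs' ys'"
  shows "xs = xs' \<and> ys = ys'"
  using assms
proof (induction xs ys arbitrary: xs' ys' rule: list_induct2)
  case Nil
  then show ?case
    using path_of_runs_eq_Nil_iff by fastforce
next
  case (Cons x xs y ys)
  then have "xs' \<noteq> []" and "ys' \<noteq> []"
    using path_of_runs_eq_Nil_iff[OF Cons.prems(1)] by auto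
  then obtain x' xs1 y' ys1 where xs': "xs' = x' # xs1" and ys': "ys' = y' # ys1"
    by (meson neq_Nil_conv)
  have len1: "length xs1 = length ys1"
    using Cons.prems(1) xs' ys' by simp
  have tail: "path_of_runs as bs = [] \<or> 0 < (if as = [] then b else Suc (Suc b)) \<and> hd (path_of_runs as bs) = U"
    if "length as = length bs" for as bs b
    using path_of_runs_eq_Nil_or_hd_U[OF that] path_of_runs_eq_Nil_iff[OF that] by auto
  have "replicate (Suc x) U @ replicate (if xs = [] then y else Suc (Suc y)) D @ path_of_runs xs ys
      = replicate (Suc x') U @ replicate (if xs1 = [] then y' else Suc (Suc y')) D @ path_of_runs xs1 ys1"
    using Cons.prems(2) unfolding xs' ys' path_of_runs.simps(1) .
  from step_runs_unique[OF this tail[OF Cons.hyps] tail[OF len1]]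
  have "x = x'" and "(if xs = [] then y else Suc (Suc y)) = (if xs1 = [] then y' else Suc (Suc y'))"
    and "path_of_runs xs ys = path_of_runs xs1 ys1"
    by simp_all
  moreover from this(3) have "xs = xs1 \<and> ys = ys1"
    using Cons.IH[OF len1] by blast
  ultimately show ?case
    using xs' ys' by (auto split: if_splits)
qed

lemma path_of_runs_surj:
  assumes "avoids_UDU w" and "w = [] \<or> hd w = U"
  shows "\<exists>xs ys. length xs = length ys \<and> w = path_of_runs xs ys"
  using assms
proof (induction "length w" arbitrary: w rule: less_induct)
  case less
  show ?case
  proof (cases "w = []")
    case True
    then show ?thesis by (intro exI[of _ "[]"]) simp
  next
    case False
    with less.prems(2) have "hd w = U" by simp
    with False obtain p q r where w: "w = replicate (Suc p) U @ replicate q D @ r"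
      and r: "r = [] \<or> 0 < q \<and> hd r = U"
      by (rule step_runs_decomp)
    then have r_U: "r = [] \<or> hd r = U" by auto
    have q: "q = 1 \<longrightarrow> r = []" and avoids_r: "avoids_UDU r"
      using less.prems(1) unfolding w avoids_UDU_block[OF r_U] by simp_all
    show ?thesis
    proof (cases "r = []")
      case True
      then show ?thesis
        using w by (intro exI[of _ "[p]"] exI[of _ "[q]"]) simp
    next
      case False
      have "length r < length w"
        using w by simp
      then obtain xs ys where len: "length xs = length ys" and r_eq: "r = path_of_runs xs ys"
        using less.hyps[OF _ avoids_r r_U] by blast
      have "xs \<noteq> []"
        using False r_eq path_of_runs_eq_Nil_iff[OF len] by simp
      moreover have "2 \<le> q"
        using q r False by auto
      then obtain y where "q = Suc (Suc y)"
        by (auto dest: le_Suc_ex simp: numeral_2_eq_2)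
      ultimately have "w = path_of_runs (p # xs) (y # ys)"
        using w r_eq by simp
      then show ?thesis
        using len by (intro exI[of _ "p # xs"] exI[of _ "y # ys"]) simp
    qed
  qed
qed

definition runs :: "nat \<Rightarrow> (nat list \<times> nat list) set" where
  "runs n = {(xs, ys). length xs = length ys \<and> xs \<noteq> [] \<and>
     sum_list xs + length xs = n \<and> sum_list ys + 2 * (length ys - 1) = n}"

lemma gd_UDU_avoid_eq_image: "gd_UDU_avoid n = case_prod path_of_runs ` runs n"
proof (intro equalityI subsetI)
  fix w
  assume "w \<in> gd_UDU_avoid n"
  then have counts: "length (filter (\<lambda>s. s = U) w) = n" "length (filter (\<lambda>s. s = D) w) = n"
    and "w \<noteq> []" "hd w = U" "avoids_UDU w"
    unfolding gd_UDU_avoid_def by auto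
  then obtain xs ys where len: "length xs = length ys" and w: "w = path_of_runs xs ys"
    using path_of_runs_surj by blast
  with \<open>w \<noteq> []\<close> have "(xs, ys) \<in> runs n"
    using counts length_filter_U_path_of_runs[OF len] length_filter_D_path_of_runs[OF len]
      path_of_runs_eq_Nil_iff[OF len]
    by (simp add: runs_def)
  with w show "w \<in> case_prod path_of_runs ` runs n"
    by force
next
  fix w
  assume "w \<in> case_prod path_of_runs ` runs n"
  then obtain xs ys where "(xs, ys) \<in> runs n" and w: "w = path_of_runs xs ys"
    by auto
  then have len: "length xs = length ys" and "xs \<noteq> []"
    and "sum_list xs + length xs = n" and "sum_list ys + 2 * (length ys - 1) = n"
    by (simp_all add: runs_def)
  then show "w \<in> gd_UDU_avoid n"
    unfolding gd_UDU_avoid_def w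
    using length_filter_U_path_of_runs[OF len] length_filter_D_path_of_runs[OF len]
      path_of_runs_eq_Nil_iff[OF len] hd_path_of_runs[OF len] avoids_UDU_path_of_runs[OF len]
    by simp
qed

lemma inj_on_path_of_runs: "inj_on (case_prod path_of_runs) (runs n)"
  by (auto simp: inj_on_def runs_def dest: path_of_runs_inj)

lemma finite_length_sum_list: "finite {l :: nat list. length l = k \<and> sum_list l + c = N}"
proof (rule finite_subset)
  show "{l :: nat list. length l = k \<and> sum_list l + c = N} \<subseteq> {l. set l \<subseteq> {..N} \<and> length l = k}"
    using member_le_sum_list by fastforce
  show "finite {l. set l \<subseteq> {..N} \<and> length l = k}"
    by (rule finite_lists_length_eq) simp
qed

lemma card_length_sum_list_add:
  "card {l :: nat list. length l = Suc k \<and> sum_list l + c = N} = (if c \<le> N then (N - c + k) choose k else 0)"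
proof (cases "c \<le> N")
  case True
  then have "{l :: nat list. length l = Suc k \<and> sum_list l + c = N} = {l. length l = Suc k \<and> sum_list l = N - c}"
    by auto
  then have "card {l :: nat list. length l = Suc k \<and> sum_list l + c = N} = (N - c + k) choose (N - c)"
    by (simp add: card_length_sum_list)
  also have "\<dots> = (N - c + k) choose k"
    using binomial_symmetric[of "N - c" "N - c + k"] by simp
  finally show ?thesis
    using True by simp
qed simp

lemma runs_Suc_eq_UN:
  "runs (Suc m) = (\<Union>j<Suc m. {xs. length xs = Suc j \<and> sum_list xs + j = m}
                              \<times> {ys. length ys = Suc j \<and> sum_list ys + 2 * j = Suc m})"
proof (intro set_eqI iffI)
  fix p
  assume "p \<in> runs (Suc m)"
  then obtain xs ys where p: "p = (xs, ys)" and "length xs = length ys" "xs \<noteq> []"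
    "sum_list xs + length xs = Suc m" "sum_list ys + 2 * (length ys - 1) = Suc m"
    unfolding runs_def by auto
  moreover obtain j where "length xs = Suc j"
    using \<open>xs \<noteq> []\<close> by (cases xs) auto
  ultimately show "p \<in> (\<Union>j<Suc m. {xs. length xs = Suc j \<and> sum_list xs + j = m}
                              \<times> {ys. length ys = Suc j \<and> sum_list ys + 2 * j = Suc m})"
    by (intro UN_I[of j]) auto
qed (auto simp: runs_def)

lemma card_runs_Suc: "card (runs (Suc m)) = (\<Sum>j<Suc m. (m choose j) * ((Suc m - j) choose j))"
  unfolding runs_Suc_eq_UN
proof (subst card_UN_disjoint)
  show "(\<Sum>j<Suc m. card ({xs. length xs = Suc j \<and> sum_list xs + j = m}
                      \<times> {ys. length ys = Suc j \<and> sum_list ys + 2 * j = Suc m}))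
      = (\<Sum>j<Suc m. (m choose j) * ((Suc m - j) choose j))"
  proof (rule sum.cong)
    fix j
    assume "j \<in> {..<Suc m}"
    moreover have "(Suc m - 2 * j + j) choose j = (Suc m - j) choose j" if "2 * j \<le> Suc m"
      using that by (simp add: algebra_simps)
    ultimately show "card ({xs. length xs = Suc j \<and> sum_list xs + j = m}
                      \<times> {ys. length ys = Suc j \<and> sum_list ys + 2 * j = Suc m})
        = (m choose j) * ((Suc m - j) choose j)"
      by (simp add: card_cartesian_product card_length_sum_list_add binomial_eq_0)
  qed simp
qed (auto simp: finite_length_sum_list)

lemma card_gd_UDU_avoid_Suc:
  "card (gd_UDU_avoid (Suc m)) = (\<Sum>j<Suc m. (m choose j) * ((Suc m - j) choose j))"
  unfolding gd_UDU_avoid_eq_image card_image[OF inj_on_path_of_runs] by (rule card_runs_Suc)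

definition A005773_rec :: "(nat \<Rightarrow> real) \<Rightarrow> bool" where
  "A005773_rec a \<longleftrightarrow>
     (\<forall>m. real (m + 3) * a (m + 2) = 2 * real (m + 3) * a (m + 1) + 3 * real (m + 1) * a m)"

lemma A005773_rec_unique:
  assumes "A005773_rec a" and "A005773_rec b" and "a 0 = b 0" and "a 1 = b 1"
  shows "a m = b m"
proof -
  have "a m = b m \<and> a (m + 1) = b (m + 1)"
  proof (induction m)
    case (Suc m)
    have "real (m + 3) * a (m + 2) = real (m + 3) * b (m + 2)"
      using assms(1,2) Suc.IH unfolding A005773_rec_def by metis
    then show ?case
      using Suc.IH by simp
  qed (use assms(3,4) in simp)
  then show ?thesis ..
qed

definition falling_fact :: "'a::comm_ring_1 \<Rightarrow> nat \<Rightarrow> 'a" where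
  "falling_fact x n = (\<Prod>i<n. x - of_nat i)"

lemma falling_fact_0 [simp]: "falling_fact x 0 = 1"
  by (simp add: falling_fact_def)

lemma falling_fact_Suc: "falling_fact x (Suc n) = falling_fact x n * (x - of_nat n)"
  by (simp add: falling_fact_def)

lemma falling_fact_Suc': "falling_fact x (Suc n) = x * falling_fact (x - 1) n"
  by (induction n) (simp_all add: falling_fact_Suc algebra_simps)

lemma falling_fact_add: "falling_fact x (m + n) = falling_fact x m * falling_fact (x - of_nat m) n"
  by (induction n) (simp_all add: falling_fact_Suc algebra_simps)

lemma falling_fact_of_nat_eq_0: "m < n \<Longrightarrow> falling_fact (of_nat m :: 'a::comm_ring_1) n = 0"
  unfolding falling_fact_def by (rule prod_zero) auto

lemma binomial_eq_falling_fact: "of_nat (n choose k) = falling_fact (of_nat n :: 'a::field_char_0) k / fact k"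
  by (simp add: binomial_gbinomial gbinomial_prod_rev falling_fact_def atLeast0LessThan)

text \<open>The summand (m choose j) ((m+1-j) choose j), extended to real m so that the
  Wilf-Zeilberger identity below is an identity of polynomials in x, without boundary cases.\<close>
definition wz_term :: "real \<Rightarrow> nat \<Rightarrow> real" where
  "wz_term x j = falling_fact x j * falling_fact (x + 1 - of_nat j) j / fact j ^ 2"

text \<open>Zeilberger's certificate wz_cert x (j+1) = 2 (x+1) (2x+3-2j) wz_term x j / (x+1-j),
  written with the denominator cancelled.\<close>
fun wz_cert :: "real \<Rightarrow> nat \<Rightarrow> real" where
  "wz_cert x 0 = 0"
| "wz_cert x (Suc 0) = 2 * (2 * x + 3)"
| "wz_cert x (Suc (Suc k)) =
     2 * (x + 1) * (2 * x + 1 - 2 * of_nat k) * falling_fact x (Suc (2 * k)) / fact (Suc k) ^ 2"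

lemma wz_term_Suc:
  "wz_term x (Suc k) = (x - of_nat k) * falling_fact x (Suc (2 * k)) / fact (Suc k) ^ 2"
proof -
  have "falling_fact x (Suc k) * falling_fact (x - of_nat k) (Suc k)
      = (x - of_nat k) * (falling_fact x (Suc k) * falling_fact (x - of_nat (Suc k)) k)"
    by (simp add: falling_fact_Suc' algebra_simps)
  also have "\<dots> = (x - of_nat k) * falling_fact x (Suc (2 * k))"
    using falling_fact_add[of x "Suc k" k] by (simp add: mult_2)
  finally have "falling_fact x (Suc k) * falling_fact (x - of_nat k) (Suc k)
      = (x - of_nat k) * falling_fact x (Suc (2 * k))" .
  then show ?thesis
    by (simp add: wz_term_def algebra_simps)
qed

lemma wz_pair:
  "3 * (x + 1) * wz_term x j + 2 * (x + 3) * wz_term (x + 1) j - (x + 3) * wz_term (x + 2) j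
     = wz_cert x (Suc j) - wz_cert x j"
proof (cases j)
  case 0
  then show ?thesis by (simp add: wz_term_def)
next
  case (Suc i)
  show ?thesis
  proof (cases i)
    case 0
    with \<open>j = Suc i\<close> show ?thesis
      by (simp add: wz_term_Suc falling_fact_Suc algebra_simps power2_eq_square)
  next
    case (Suc k)
    define Q where "Q = falling_fact x (Suc (2 * k))"
    define N :: real where "N = fact (Suc (Suc k)) ^ 2"
    have "(fact (Suc (Suc k)) :: real) = (of_nat k + 2) * fact (Suc k)"
      by (simp add: algebra_simps)
    then have N: "N = (of_nat k + 2) ^ 2 * fact (Suc k) ^ 2" "N \<noteq> 0"
      by (simp_all add: N_def power_mult_distrib)
    have term0: "wz_term x j = (x - of_nat k - 1) * (x - 2 * of_nat k - 1) * (x - 2 * of_nat k - 2) * Q / N"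
      unfolding \<open>j = Suc i\<close> Suc wz_term_Suc Q_def N_def
      by (simp add: falling_fact_Suc algebra_simps)
    have term1: "wz_term (x + 1) j = (x - of_nat k) * (x + 1) * (x - 2 * of_nat k - 1) * Q / N"
      unfolding \<open>j = Suc i\<close> Suc wz_term_Suc Q_def N_def
      by (subst falling_fact_Suc') (simp add: falling_fact_Suc algebra_simps)
    have term2: "wz_term (x + 2) j = (x - of_nat k + 1) * (x + 2) * (x + 1) * Q / N"
      unfolding \<open>j = Suc i\<close> Suc wz_term_Suc Q_def N_def
      by (simp add: falling_fact_Suc' algebra_simps)
    have cert1: "wz_cert x (Suc j) =
        2 * (x + 1) * (2 * x - 1 - 2 * of_nat k) * (x - 2 * of_nat k - 1) * (x - 2 * of_nat k - 2) * Q / N"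
      unfolding \<open>j = Suc i\<close> Suc Q_def N_def
      by (simp add: falling_fact_Suc algebra_simps)
    have cert0: "wz_cert x j = 2 * (x + 1) * (2 * x + 1 - 2 * of_nat k) * (of_nat k + 2) ^ 2 * Q / N"
      unfolding \<open>j = Suc i\<close> Suc Q_def N(1) by simp
    show ?thesis
      unfolding term0 term1 term2 cert0 cert1 using N(2)
      by (simp add: divide_simps) (simp add: algebra_simps power2_eq_square)
  qed
qed

definition wz_sum :: "nat \<Rightarrow> real" where
  "wz_sum m = (\<Sum>j<Suc m. wz_term (of_nat m) j)"

lemma wz_term_of_nat: "wz_term (of_nat m) j = real (m choose j) * real ((Suc m - j) choose j)"
proof (cases "j \<le> Suc m")
  case True
  then have "of_nat m + 1 - of_nat j = (of_nat (Suc m - j) :: real)"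
    by (simp add: of_nat_diff)
  then show ?thesis
    by (simp add: wz_term_def binomial_eq_falling_fact power2_eq_square)
next
  case False
  then show ?thesis
    by (simp add: wz_term_def falling_fact_of_nat_eq_0)
qed

lemma wz_sum_eq: "m < N \<Longrightarrow> (\<Sum>j<N. wz_term (of_nat m) j) = wz_sum m"
  unfolding wz_sum_def
  by (rule sum.mono_neutral_right) (auto simp: wz_term_def falling_fact_of_nat_eq_0)

lemma A005773_rec_wz_sum: "A005773_rec wz_sum"
  unfolding A005773_rec_def
proof
  fix m
  let ?x = "real m"
  have "(\<Sum>j<m + 4. wz_term ?x j) = wz_sum m"
    and "(\<Sum>j<m + 4. wz_term (?x + 1) j) = wz_sum (m + 1)"
    and "(\<Sum>j<m + 4. wz_term (?x + 2) j) = wz_sum (m + 2)"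
    using wz_sum_eq[of m "m + 4"] wz_sum_eq[of "m + 1" "m + 4"] wz_sum_eq[of "m + 2" "m + 4"]
    by (simp_all add: add.commute)
  then have "3 * (?x + 1) * wz_sum m + 2 * (?x + 3) * wz_sum (m + 1) - (?x + 3) * wz_sum (m + 2)
      = (\<Sum>j<m + 4. 3 * (?x + 1) * wz_term ?x j + 2 * (?x + 3) * wz_term (?x + 1) j
          - (?x + 3) * wz_term (?x + 2) j)"
    by (simp add: sum_subtractf sum.distrib flip: sum_distrib_left)
  also have "\<dots> = wz_cert ?x (m + 4) - wz_cert ?x 0"
    unfolding wz_pair by (rule sum_lessThan_telescope)
  also have "\<dots> = 0"
    using falling_fact_of_nat_eq_0[of m "Suc (2 * (m + 2))"]
    by (simp add: numeral_eq_Suc)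
  finally have "3 * (?x + 1) * wz_sum m + 2 * (?x + 3) * wz_sum (m + 1) - (?x + 3) * wz_sum (m + 2) = 0" .
  then show "real (m + 3) * wz_sum (m + 2) = 2 * real (m + 3) * wz_sum (m + 1) + 3 * real (m + 1) * wz_sum m"
    by (simp add: algebra_simps)
qed

lemma card_gd_UDU_avoid_eq_wz_sum: "real (card (gd_UDU_avoid (Suc m))) = wz_sum m"
  by (simp add: card_gd_UDU_avoid_Suc wz_sum_def wz_term_of_nat)

lemma fps_deriv_sqrt_eq:
  fixes S P :: "'a::comm_ring_1 fps"
  assumes "S ^ 2 = P"
  shows "2 * P * fps_deriv S = fps_deriv P * S"
proof -
  have "fps_deriv P = 2 * S * fps_deriv S"
    unfolding assms[symmetric] power2_eq_square by (simp add: algebra_simps mult_2)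
  then show ?thesis
    unfolding assms[symmetric] by (simp add: power2_eq_square algebra_simps)
qed

lemma sqrt_ser_squared: "sqrt_ser ^ 2 = 1 - 2 * fps_X - 3 * fps_X ^ 2"
  unfolding sqrt_ser_def numeral_2_eq_2 by (subst power_radical[symmetric]) simp_all

lemma sqrt_ser_eq_gf: "sqrt_ser = (1 - 3 * fps_X) * (1 + 2 * gf)"
proof -
  have "fps_nth (6 * fps_X - 2 :: real fps) 0 \<noteq> 0" by simp
  then have "gf * (6 * fps_X - 2) = 1 - 3 * fps_X - sqrt_ser"
    unfolding gf_def by (simp add: fps_divide_unit mult.assoc inverse_mult_eq_1)
  then show ?thesis by (simp add: algebra_simps)
qed

lemma gf_ode: "(1 - 2 * fps_X - 3 * fps_X ^ 2) * fps_deriv gf = 1 + 2 * gf"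
proof -
  have "2 * ((1 - 2 * fps_X - 3 * fps_X ^ 2) * fps_deriv sqrt_ser) = 2 * ((- 1 - 3 * fps_X) * sqrt_ser)"
    using fps_deriv_sqrt_eq[OF sqrt_ser_squared] by (simp add: power2_eq_square algebra_simps)
  then have "(1 - 2 * fps_X - 3 * fps_X ^ 2) * fps_deriv sqrt_ser = (- 1 - 3 * fps_X) * sqrt_ser"
    by simp
  then have "(2 - 6 * fps_X) * ((1 - 2 * fps_X - 3 * fps_X ^ 2) * fps_deriv gf - (1 + 2 * gf)) = 0"
    unfolding sqrt_ser_eq_gf by (simp add: algebra_simps power2_eq_square)
  moreover have "(2 - 6 * fps_X :: real fps) \<noteq> 0"
    by (auto dest: arg_cong[where f = "\<lambda>f. fps_nth f 0"])
  ultimately show ?thesis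
    by simp
qed

lemma gf_nth_0: "fps_nth gf 0 = 0"
  using arg_cong[OF sqrt_ser_eq_gf, of "\<lambda>f. fps_nth f 0"] by (simp add: sqrt_ser_def)

lemma gf_ode_nth:
  "real (Suc n) * fps_nth gf (Suc n) - 2 * (real n * fps_nth gf n) - 3 * (real (n - 1) * fps_nth gf (n - 1))
     = (if n = 0 then 1 else 0) + 2 * fps_nth gf n"
  using arg_cong[OF gf_ode, of "\<lambda>f. fps_nth f n"]
  by (cases n) (simp_all add: algebra_simps power2_eq_square numeral_fps_const)

lemma A005773_rec_gf_shift: "A005773_rec (\<lambda>m. fps_nth gf (Suc m))"
  unfolding A005773_rec_def
proof
  fix m
  show "real (m + 3) * fps_nth gf (Suc (m + 2)) =
      2 * real (m + 3) * fps_nth gf (Suc (m + 1)) + 3 * real (m + 1) * fps_nth gf (Suc m)"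
    using gf_ode_nth[of "m + 2"] by (simp add: algebra_simps)
qed

lemma gf_nth_1: "fps_nth gf 1 = 1"
  using gf_ode_nth[of 0] gf_nth_0 by simp

lemma gf_nth_2: "fps_nth gf 2 = 2"
  using gf_ode_nth[of 1] gf_nth_0 gf_nth_1 by (simp add: numeral_2_eq_2)

theorem corollary2:
  fixes n :: nat
  assumes "n \<ge> 1"
  shows "real (card (gd_UDU_avoid n)) = fps_nth gf n"
proof -
  obtain m where n: "n = Suc m"
    using assms by (cases n) auto
  have "wz_sum m = fps_nth gf (Suc m)"
  proof (rule A005773_rec_unique[OF A005773_rec_wz_sum A005773_rec_gf_shift])
    show "wz_sum 0 = fps_nth gf (Suc 0)" and "wz_sum 1 = fps_nth gf (Suc 1)"
      using gf_nth_1 gf_nth_2 by (simp_all add: wz_sum_def wz_term_def falling_fact_Suc numeral_2_eq_2)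
  qed
  then show ?thesis
    unfolding n card_gd_UDU_avoid_eq_wz_sum .
qed

end
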